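(* Let $n\ge 2$ and let $A$ be an associative (not necessarily unital) algebra over a field which is generalized commutative of degree $n$, i.e. $A$ satisfies the identity $x_1x_2\cdots x_n=x_nx_{n-1}\cdots x_1$. If $n\not\equiv 1 \pmod 4$, then $A$ is eventually commutative of degree $n+1$; otherwise (if $n\equiv 1\pmod 4$), $A$ is eventually commutative of degree $n+2$.
   Context: An algebra $A$ satisfies an identity $x_1\cdots x_m=x_{\tau(1)}\cdots x_{\tau(m)}$ (with $\tau\in S_m$) if $a_1\cdots a_m=a_{\tau(1)}\cdots a_{\tau(m)}$ for all $a_1,\dots,a_m\in A$. $A$ is eventually commutative of degree $k$ if it satisfies $x_1\cdots x_k=x_{\tau(1)}\cdots x_{\tau(k)}$ for every $\tau\in S_k$. *)

theory Defs
  imports "HOL.Vector_Spaces" "HOL-Combinatorics.Permutations"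
begin

fun nprod :: "'a::semigroup_mult list \<Rightarrow> 'a" where
  "nprod [] = undefined"
| "nprod [x] = x"
| "nprod (x # y # xs) = x * nprod (y # xs)"

definition satisfies_identity :: "'a::semigroup_mult itself \<Rightarrow> nat \<Rightarrow> (nat \<Rightarrow> nat) \<Rightarrow> bool" where
  "satisfies_identity _ m \<tau> \<longleftrightarrow>
     (\<forall>a :: nat \<Rightarrow> 'a. nprod (map a [0..<m]) = nprod (map (\<lambda>i. a (\<tau> i)) [0..<m]))"

definition eventually_commutative :: "'a::semigroup_mult itself \<Rightarrow> nat \<Rightarrow> bool" where
  "eventually_commutative T k \<longleftrightarrow> (\<forall>\<tau>. \<tau> permutes {0..<k} \<longrightarrow> satisfies_identity T k \<tau>)"

definition generalized_commutative :: "'a::semigroup_mult itself \<Rightarrow> nat \<Rightarrow> bool" where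
  "generalized_commutative T n \<longleftrightarrow> satisfies_identity T n (\<lambda>i. if i < n then n - 1 - i else i)"

definition is_algebra :: "('k::field \<Rightarrow> 'a::ring \<Rightarrow> 'a) \<Rightarrow> bool" where
  "is_algebra scale \<longleftrightarrow> vector_space scale \<and>
     (\<forall>c x y. scale c (x * y) = scale c x * y \<and> scale c (x * y) = x * scale c y)"

end

(*
  Applying x_1 ... x_n = x_n ... x_1 twice, each time with one adjacent pair of factors merged
  into a single factor, shows that products of n + 1 factors are invariant under rotating any
  three consecutive factors. These rotations generate all even permutations, so it remains to
  find one odd permutation of the factors that preserves products. Reversing k letters is odd
  exactly when k mod 4 is 2 or 3, and merging pairs before reversing changes the parity: for
  n mod 4 = 2, 3 reverse the first n of n + 1 factors; for n mod 4 = 0 reverse n blocks of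
  n + 1 factors, one block being a pair; for n mod 4 = 1 two pairs are needed, hence n + 2
  factors.
*)

theory Submission
  imports Defs
begin

lemma nprod_Cons: "xs \<noteq> [] \<Longrightarrow> nprod (x # xs) = x * nprod xs"
  by (cases xs) auto

lemma nprod_append: "xs \<noteq> [] \<Longrightarrow> ys \<noteq> [] \<Longrightarrow> nprod (xs @ ys) = nprod xs * nprod ys"
  by (induction xs rule: nprod.induct) (simp_all add: nprod_Cons mult.assoc)

lemma nprod_merge: "nprod (u @ [x, y] @ v) = nprod (u @ [x * y] @ v)"
  by (induction u) (cases v; simp add: mult.assoc nprod_Cons)+

lemma nprod_concat:
  "[] \<notin> set xss \<Longrightarrow> nprod (concat xss) = nprod (map nprod xss)"
proof (induction xss)
  case (Cons xs xss)
  show ?case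
  proof (cases "xss = []")
    case False
    moreover have "xs \<noteq> []"
      using Cons.prems by auto
    moreover have "concat xss \<noteq> []"
      using Cons.prems False by (cases xss) auto
    ultimately show ?thesis
      using Cons by (simp add: nprod_append nprod_Cons)
  qed simp
qed simp

lemma generalized_commutative_rev:
  assumes "generalized_commutative TYPE('a::semigroup_mult) n" and "length xs = n"
  shows "nprod (xs :: 'a list) = nprod (rev xs)"
proof -
  have "map (\<lambda>i. xs ! (if i < n then n - 1 - i else i)) [0..<n] = rev xs"
    using assms(2) by (intro nth_equalityI) (auto simp: rev_nth)
  then show ?thesis
    using assms unfolding generalized_commutative_def satisfies_identity_def
    by (metis map_nth)
qed

lemma generalized_commutative_concat:
  assumes "generalized_commutative TYPE('a::semigroup_mult) n"
    and "length xss = n" and "[] \<notin> set xss"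
  shows "nprod (concat (xss :: 'a list list)) = nprod (concat (rev xss))"
  using assms generalized_commutative_rev[OF assms(1), of "map nprod xss"]
  by (simp add: nprod_concat rev_map)

definition interchangeable :: "nat \<Rightarrow> 'a::semigroup_mult list \<Rightarrow> 'a list \<Rightarrow> bool" where
  "interchangeable m xs ys \<longleftrightarrow> length xs = length ys \<and>
     (\<forall>u v. length u + length xs + length v = m \<longrightarrow> nprod (u @ xs @ v) = nprod (u @ ys @ v))"

lemma interchangeableD:
  "interchangeable m xs ys \<Longrightarrow> length u + length xs + length v = m \<Longrightarrow>
    nprod (u @ xs @ v) = nprod (u @ ys @ v)"
  unfolding interchangeable_def by blast

lemma interchangeable_nprod_eq:
  "interchangeable m xs ys \<Longrightarrow> length xs = m \<Longrightarrow> nprod xs = nprod ys"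
  using interchangeableD[of m xs ys "[]" "[]"] by simp

lemma interchangeable_refl: "interchangeable m xs xs"
  unfolding interchangeable_def by simp

lemma interchangeable_sym: "interchangeable m xs ys \<Longrightarrow> interchangeable m ys xs"
  unfolding interchangeable_def by simp

lemma interchangeable_trans [trans]:
  "interchangeable m xs ys \<Longrightarrow> interchangeable m ys zs \<Longrightarrow> interchangeable m xs zs"
  unfolding interchangeable_def by simp

lemma interchangeable_append_context:
  assumes "interchangeable m xs ys"
  shows "interchangeable m (p @ xs @ q) (p @ ys @ q)"
  unfolding interchangeable_def
proof (intro conjI allI impI)
  show "length (p @ xs @ q) = length (p @ ys @ q)"
    using assms by (simp add: interchangeable_def)
  fix u v :: "'a list" assume "length u + length (p @ xs @ q) + length v = m"
  then have "nprod ((u @ p) @ xs @ (q @ v)) = nprod ((u @ p) @ ys @ (q @ v))"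
    by (intro interchangeableD[OF assms]) simp
  then show "nprod (u @ (p @ xs @ q) @ v) = nprod (u @ (p @ ys @ q) @ v)" by simp
qed

lemma interchangeable_append_left:
  "interchangeable m xs ys \<Longrightarrow> interchangeable m (p @ xs) (p @ ys)"
  using interchangeable_append_context[of m xs ys p "[]"] by simp

lemma interchangeable_append_right:
  "interchangeable m xs ys \<Longrightarrow> interchangeable m (xs @ q) (ys @ q)"
  using interchangeable_append_context[of m xs ys "[]" q] by simp

lemma interchangeable_Suc:
  assumes xy: "interchangeable m xs ys" and len: "length xs + 2 \<le> m"
  shows "interchangeable (Suc m) xs ys"
  unfolding interchangeable_def
proof (intro conjI allI impI)
  show "length xs = length ys" using xy by (simp add: interchangeable_def)
  fix u v :: "'a list" assume uv: "length u + length xs + length v = Suc m"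
  show "nprod (u @ xs @ v) = nprod (u @ ys @ v)"
  proof (cases "2 \<le> length v")
    case True
    then obtain a b v' where v: "v = a # b # v'"
      by (metis Suc_le_length_iff numeral_2_eq_2)
    have "nprod (u @ xs @ v) = nprod ((u @ xs) @ [a * b] @ v')"
      using nprod_merge[of "u @ xs"] by (simp add: v)
    also have "\<dots> = nprod ((u @ ys) @ [a * b] @ v')"
      using interchangeableD[OF xy, of u "a * b # v'"] uv v by simp
    also have "\<dots> = nprod (u @ ys @ v)"
      using nprod_merge[of "u @ ys"] by (simp add: v)
    finally show ?thesis .
  next
    case False
    with uv len have "2 \<le> length (rev u)" by simp
    then obtain b a r where "rev u = b # a # r"
      by (cases "rev u"; cases "tl (rev u)") auto
    then have u: "u = rev r @ [a, b]"
      by (simp add: rev_swap)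
    have "nprod (u @ xs @ v) = nprod (rev r @ [a * b] @ xs @ v)"
      using nprod_merge[of "rev r"] by (simp add: u)
    also have "\<dots> = nprod (rev r @ [a * b] @ ys @ v)"
      using interchangeableD[OF xy, of "rev r @ [a * b]" v] uv u by simp
    also have "\<dots> = nprod (u @ ys @ v)"
      using nprod_merge[of "rev r"] by (simp add: u)
    finally show ?thesis .
  qed
qed

lemma generalized_commutative_rotate3:
  assumes gc: "generalized_commutative TYPE('a::semigroup_mult) n"
  shows "interchangeable (Suc n) [x, y, z :: 'a] [y, z, x]"
  unfolding interchangeable_def
proof (intro conjI allI impI)
  fix u v :: "'a list" assume len: "length u + length [x, y, z] + length v = Suc n"
  let ?singles = "map (\<lambda>a. [a])"
  \<comment> \<open>reverse u (x y) z v, regroup the result as rev v (z x) y rev u, and reverse again\<close>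
  have "nprod (u @ [x, y, z] @ v) = nprod (concat (?singles u @ [[x, y], [z]] @ ?singles v))"
    by simp
  also have "\<dots> = nprod (concat (?singles (rev v) @ [[z, x], [y]] @ ?singles (rev u)))"
    using generalized_commutative_concat[OF gc, of "?singles u @ [[x, y], [z]] @ ?singles v"] len
    by (simp add: rev_map image_iff)
  also have "\<dots> = nprod (u @ [y, z, x] @ v)"
    using generalized_commutative_concat[OF gc, of "?singles (rev v) @ [[z, x], [y]] @ ?singles (rev u)"] len
    by (simp add: rev_map image_iff)
  finally show "nprod (u @ [x, y, z] @ v) = nprod (u @ [y, z, x] @ v)" .
qed simp

lemma generalized_commutative_rotate3_ge:
  assumes gc: "generalized_commutative TYPE('a::semigroup_mult) n" and "4 \<le> n"
  shows "n < m \<Longrightarrow> interchangeable m [x, y, z :: 'a] [y, z, x]"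
proof (induction m)
  case (Suc m)
  show ?case
  proof (cases "m = n")
    case True
    then show ?thesis using generalized_commutative_rotate3[OF gc] by simp
  next
    case False
    then show ?thesis using Suc \<open>4 \<le> n\<close> by (intro interchangeable_Suc) auto
  qed
qed simp

context
  fixes m :: nat
  assumes rotate3: "\<And>x y z :: 'a::semigroup_mult. interchangeable m [x, y, z] [y, z, x]"
begin

lemma interchangeable_rotate3_context:
  "interchangeable m (p @ [x, y, z] @ q) (p @ [y, z, x] @ (q :: 'a list))"
  by (rule interchangeable_append_context[OF rotate3])

lemma interchangeable_Cons_snoc:
  "even (length s) \<Longrightarrow> interchangeable m (x # s) (s @ [x :: 'a])"
proof (induction s rule: induct_list012)
  case (3 y z s)
  have "interchangeable m ([x, y, z] @ s) ([y, z, x] @ s)"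
    by (intro interchangeable_append_right rotate3)
  also have "[y, z, x] @ s = [y, z] @ (x # s)"
    by simp
  also have "interchangeable m \<dots> ([y, z] @ (s @ [x]))"
    using 3 by (intro interchangeable_append_left) simp
  finally show ?case by simp
qed (simp_all add: interchangeable_refl)

lemma interchangeable_append_commute:
  assumes "even (length p * length q)"
  shows "interchangeable m (p @ q) (q @ (p :: 'a list))"
proof -
  have swap: "interchangeable m (p @ q) (q @ p)" if "even (length q)" for p q :: "'a list"
  proof (induction p)
    case (Cons x p)
    have "interchangeable m ([x] @ (p @ q)) ([x] @ (q @ p))"
      using Cons.IH by (rule interchangeable_append_left)
    also have "[x] @ (q @ p) = (x # q) @ p"
      by simp
    also have "interchangeable m \<dots> ((q @ [x]) @ p)"
      using that by (intro interchangeable_append_right interchangeable_Cons_snoc)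
    finally show ?case by simp
  qed (simp add: interchangeable_refl)
  from assms consider "even (length q)" | "even (length p)" by auto
  then show ?thesis
    using swap[of q p] swap[of p q] interchangeable_sym by cases blast+
qed

lemma interchangeable_rev4: "interchangeable m [d, c, b, a] [a, b, c, d :: 'a]"
proof -
  have "interchangeable m [d, c, b, a] [d, b, a, c]"
    using interchangeable_rotate3_context[of "[d]" c b a "[]"] by simp
  also have "interchangeable m \<dots> [b, a, d, c]"
    using interchangeable_rotate3_context[of "[]" d b a "[c]"] by simp
  also have "interchangeable m \<dots> [a, d, b, c]"
    using interchangeable_rotate3_context[of "[]" b a d "[c]"] by simp
  also have "interchangeable m \<dots> [a, b, c, d]"
    using interchangeable_rotate3_context[of "[a]" d b c "[]"] by simp
  finally show ?thesis .
qed

lemma interchangeable_rev_self: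
  "length s mod 4 \<in> {0, 1} \<Longrightarrow> interchangeable m (rev s) (s :: 'a list)"
proof (induction "length s" arbitrary: s rule: less_induct)
  case less
  show ?case
  proof (cases "length s \<le> 1")
    case True
    then have "rev s = s" by (cases s) auto
    then show ?thesis by (simp add: interchangeable_refl)
  next
    case False
    with less.prems have "4 \<le> length s" by (auto; presburger)
    then obtain a b c d t where s: "s = a # b # c # d # t"
      by (auto simp: Suc_le_length_iff numeral_eq_Suc)
    have "interchangeable m (rev t @ [d, c, b, a]) ([d, c, b, a] @ rev t)"
      by (rule interchangeable_append_commute) simp
    also have "interchangeable m \<dots> ([d, c, b, a] @ t)"
      using less s by (intro interchangeable_append_left less.hyps) auto
    also have "interchangeable m \<dots> ([a, b, c, d] @ t)"
      by (intro interchangeable_append_right interchangeable_rev4)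
    finally show ?thesis by (simp add: s)
  qed
qed

lemma interchangeable_rev_swap:
  assumes "length t mod 4 \<in> {0, 1}"
  shows "interchangeable m (rev (a # b # t)) (b # a # (t :: 'a list))"
proof -
  have "interchangeable m (rev t @ [b, a]) ([b, a] @ rev t)"
    by (rule interchangeable_append_commute) simp
  also have "interchangeable m \<dots> ([b, a] @ t)"
    using assms by (intro interchangeable_append_left interchangeable_rev_self)
  finally show ?thesis by simp
qed

end

lemma interchangeable_swap_if_swap_front:
  assumes rotate3: "\<And>x y z :: 'a::semigroup_mult. interchangeable m [x, y, z] [y, z, x]"
    and swap_front: "\<And>x y w. length w + 2 = m \<Longrightarrow> nprod (x # y # w) = nprod (y # x # (w :: 'a list))"
  shows "interchangeable m [x, y] [y, x :: 'a]"
  unfolding interchangeable_def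
proof (intro conjI allI impI)
  fix u v :: "'a list"
  show "length u + length [x, y] + length v = m \<Longrightarrow> nprod (u @ [x, y] @ v) = nprod (u @ [y, x] @ v)"
  proof (induction u arbitrary: v rule: rev_induct)
    case Nil
    then have "length v + 2 = m" by simp
    then have "nprod (x # y # v) = nprod (y # x # v)" by (rule swap_front)
    then show ?case by simp
  next
    case (snoc c u)
    have "nprod ((u @ [c]) @ [x, y] @ v) = nprod (u @ [c, x, y] @ v)"
      by simp
    also have "\<dots> = nprod (u @ [x, y] @ c # v)"
      using interchangeableD[OF rotate3[of c x y], of u v] snoc.prems by simp
    also have "\<dots> = nprod (u @ [y, x] @ c # v)"
      using snoc.prems by (intro snoc.IH) simp
    also have "\<dots> = nprod (u @ [c, y, x] @ v)"
      using interchangeableD[OF rotate3[of c y x], of u v] snoc.prems by simp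
    finally show ?case by simp
  qed
qed simp

lemma interchangeable_if_mset_eq:
  assumes swap: "\<And>x y :: 'a::semigroup_mult. interchangeable m [x, y] [y, x]"
  shows "mset xs = mset ys \<Longrightarrow> interchangeable m xs (ys :: 'a list)"
proof (induction xs arbitrary: ys)
  case Nil
  then show ?case by (simp add: interchangeable_refl)
next
  case (Cons x xs)
  have move_front: "interchangeable m (p @ [x]) (x # p)" for p
  proof (induction p)
    case (Cons a p)
    have "interchangeable m ([a] @ (p @ [x])) ([a] @ (x # p))"
      using Cons.IH by (rule interchangeable_append_left)
    also have "[a] @ (x # p) = [a, x] @ p"
      by simp
    also have "interchangeable m \<dots> ([x, a] @ p)"
      by (intro interchangeable_append_right swap)
    finally show ?case by simp
  qed (simp add: interchangeable_refl)
  have "x \<in> set ys"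
    using Cons.prems by (metis list.set_intros(1) set_mset_mset)
  then obtain ys1 ys2 where ys: "ys = ys1 @ x # ys2"
    by (meson split_list)
  have "interchangeable m ([x] @ xs) ([x] @ (ys1 @ ys2))"
    using Cons ys by (intro interchangeable_append_left Cons.IH) simp
  also have "[x] @ (ys1 @ ys2) = (x # ys1) @ ys2"
    by simp
  also have "interchangeable m \<dots> ((ys1 @ [x]) @ ys2)"
    using interchangeable_sym[OF move_front] by (rule interchangeable_append_right)
  finally show ?case by (simp add: ys)
qed

lemma eventually_commutative_if_swap:
  assumes "\<And>x y :: 'a::semigroup_mult. interchangeable m [x, y] [y, x]"
  shows "eventually_commutative TYPE('a) m"
  unfolding eventually_commutative_def satisfies_identity_def
proof (intro allI impI)
  fix \<tau> :: "nat \<Rightarrow> nat" and a :: "nat \<Rightarrow> 'a"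
  assume \<tau>: "\<tau> permutes {0..<m}"
  have permuted: "image_mset \<tau> (mset_set {0..<m}) = mset_set {0..<m}"
    using image_mset_mset_set[of \<tau> "{0..<m}"] permutes_inj_on[OF \<tau>] permutes_image[OF \<tau>]
    by simp
  have "mset (map (\<lambda>i. a (\<tau> i)) [0..<m]) = image_mset a (image_mset \<tau> (mset [0..<m]))"
    by (simp add: multiset.map_comp o_def)
  also have "\<dots> = mset (map a [0..<m])"
    by (simp add: mset_upt permuted)
  finally have "mset (map a [0..<m]) = mset (map (\<lambda>i. a (\<tau> i)) [0..<m])" ..
  then have "interchangeable m (map a [0..<m]) (map (\<lambda>i. a (\<tau> i)) [0..<m])"
    by (rule interchangeable_if_mset_eq[OF assms])
  then show "nprod (map a [0..<m]) = nprod (map (\<lambda>i. a (\<tau> i)) [0..<m])"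
    by (rule interchangeable_nprod_eq) simp
qed

lemma swap_front_mod4_23:
  assumes gc: "generalized_commutative TYPE('a::semigroup_mult) n"
    and n: "n mod 4 \<in> {2, 3}" and len: "length w + 2 = Suc n"
  shows "nprod (x # y # w) = nprod (y # x # (w :: 'a list))"
proof -
  define t where "t = take (n - 2) w"
  define s where "s = drop (n - 2) w"
  have w: "w = t @ s"
    by (simp add: t_def s_def)
  have "2 \<le> n"
    using n by auto
  with len have lt: "length t + 2 = n" and "s \<noteq> []"
    by (simp_all add: t_def s_def)
  with n have t: "length t mod 4 \<in> {0, 1}"
    by auto presburger+
  have "nprod (x # y # w) = nprod (x # y # t) * nprod s"
    using nprod_append[of "x # y # t" s] \<open>s \<noteq> []\<close> by (simp add: w)
  also have "\<dots> = nprod (rev (x # y # t)) * nprod s"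
    using generalized_commutative_rev[OF gc, of "x # y # t"] lt by simp
  also have "\<dots> = nprod ([] @ rev (x # y # t) @ s)"
    using nprod_append[of "rev (x # y # t)" s] \<open>s \<noteq> []\<close> by simp
  also have "\<dots> = nprod ([] @ (y # x # t) @ s)"
    using len
    by (intro interchangeableD[OF interchangeable_rev_swap[OF generalized_commutative_rotate3[OF gc] t]])
      (simp add: w)
  finally show ?thesis by (simp add: w)
qed

lemma swap_front_mod4_0:
  assumes gc: "generalized_commutative TYPE('a::semigroup_mult) n"
    and n: "n mod 4 = 0" "2 \<le> n" and len: "length w + 2 = Suc n"
  shows "nprod (x # y # w) = nprod (y # x # (w :: 'a list))"
proof -
  note rotate3 = generalized_commutative_rotate3[OF gc]
  define t where "t = take (n - 3) w"
  define s where "s = drop (n - 3) w"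
  let ?r = "rev (x # y # t)"
  have w: "w = t @ s"
    by (simp add: t_def s_def)
  have "4 \<le> n"
    using n by presburger
  with len have lt: "length t + 3 = n" and ls: "length s = 2"
    by (simp_all add: t_def s_def)
  with n have t: "length t mod 4 \<in> {0, 1}"
    by auto presburger
  have blocks: "[] \<notin> set (map (\<lambda>a. [a]) (x # y # t) @ [s])"
    using ls by auto
  have "nprod (x # y # w) = nprod (concat (map (\<lambda>a. [a]) (x # y # t) @ [s]))"
    by (simp add: w)
  also have "\<dots> = nprod (s @ ?r)"
    using generalized_commutative_concat[OF gc _ blocks] lt by (simp add: rev_map)
  also have "\<dots> = nprod ((y # x # t) @ s)"
  proof (rule interchangeable_nprod_eq)
    have "interchangeable (Suc n) (s @ ?r) (?r @ s)"
      by (rule interchangeable_append_commute[OF rotate3]) (simp add: ls)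
    also have "interchangeable (Suc n) \<dots> ((y # x # t) @ s)"
      by (intro interchangeable_append_right interchangeable_rev_swap[OF rotate3 t])
    finally show "interchangeable (Suc n) (s @ ?r) ((y # x # t) @ s)" .
  qed (use lt ls in simp)
  finally show ?thesis by (simp add: w)
qed

lemma swap_front_mod4_1:
  assumes gc: "generalized_commutative TYPE('a::semigroup_mult) n"
    and n: "n mod 4 = 1" "2 \<le> n" and len: "length w + 2 = n + 2"
  shows "nprod (x # y # w) = nprod (y # x # (w :: 'a list))"
proof -
  define t where "t = take (n - 4) w"
  define s where "s = drop (n - 4) w"
  define s\<^sub>1 where "s\<^sub>1 = take 2 s"
  define s\<^sub>2 where "s\<^sub>2 = drop 2 s"
  let ?r = "rev (x # y # t)"
  have w: "w = t @ s\<^sub>1 @ s\<^sub>2"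
    by (simp add: t_def s_def s\<^sub>1_def s\<^sub>2_def del: drop_drop)
  have "5 \<le> n"
    using n by presburger
  then have rotate3: "interchangeable (n + 2) [x, y, z] [y, z, x]" for x y z :: 'a
    by (intro generalized_commutative_rotate3_ge[OF gc]) simp_all
  from len \<open>5 \<le> n\<close> have lt: "length t + 4 = n" and ls: "length s\<^sub>1 = 2" "length s\<^sub>2 = 2"
    by (simp_all add: t_def s_def s\<^sub>1_def s\<^sub>2_def)
  with n have t: "length t mod 4 \<in> {0, 1}"
    by auto
  have blocks: "[] \<notin> set (map (\<lambda>a. [a]) (x # y # t) @ [s\<^sub>1, s\<^sub>2])"
    using ls by auto
  have "nprod (x # y # w) = nprod (concat (map (\<lambda>a. [a]) (x # y # t) @ [s\<^sub>1, s\<^sub>2]))"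
    by (simp add: w)
  also have "\<dots> = nprod ((s\<^sub>2 @ s\<^sub>1) @ ?r)"
    using generalized_commutative_concat[OF gc _ blocks] lt by (simp add: rev_map)
  also have "\<dots> = nprod ((y # x # t) @ s\<^sub>1 @ s\<^sub>2)"
  proof (rule interchangeable_nprod_eq)
    have "interchangeable (n + 2) ((s\<^sub>2 @ s\<^sub>1) @ ?r) (?r @ s\<^sub>2 @ s\<^sub>1)"
      by (rule interchangeable_append_commute[OF rotate3]) (simp add: ls)
    also have "interchangeable (n + 2) \<dots> (?r @ s\<^sub>1 @ s\<^sub>2)"
      by (intro interchangeable_append_left interchangeable_append_commute[OF rotate3]) (simp add: ls)
    also have "interchangeable (n + 2) \<dots> ((y # x # t) @ s\<^sub>1 @ s\<^sub>2)"
      by (intro interchangeable_append_right interchangeable_rev_swap[OF rotate3 t])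
    finally show "interchangeable (n + 2) ((s\<^sub>2 @ s\<^sub>1) @ ?r) ((y # x # t) @ s\<^sub>1 @ s\<^sub>2)" .
  qed (use lt ls in simp)
  finally show ?thesis by (simp add: w)
qed

theorem theorem3p4:
  fixes scale :: "'k::field \<Rightarrow> 'a::ring \<Rightarrow> 'a"
    and n :: nat
  assumes "is_algebra scale"
    and "n \<ge> 2"
    and "generalized_commutative TYPE('a) n"
  shows "(n mod 4 \<noteq> 1 \<longrightarrow> eventually_commutative TYPE('a) (n + 1)) \<and>
         (n mod 4 = 1 \<longrightarrow> eventually_commutative TYPE('a) (n + 2))"
proof -
  have "eventually_commutative TYPE('a) (n + 1)" if "n mod 4 \<noteq> 1"
  proof -
    from that have "n mod 4 = 0 \<or> n mod 4 \<in> {2, 3}"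
      by auto
    then have "nprod (x # y # w) = nprod (y # x # w)" if "length w + 2 = Suc n" for x y :: 'a and w
      using swap_front_mod4_0[OF assms(3) _ assms(2) that] swap_front_mod4_23[OF assms(3) _ that]
      by (elim disjE) simp_all
    with generalized_commutative_rotate3[OF assms(3)]
    have "interchangeable (Suc n) [x, y] [y, x]" for x y :: 'a
      by (rule interchangeable_swap_if_swap_front)
    then show ?thesis
      by (simp add: eventually_commutative_if_swap)
  qed
  moreover have "eventually_commutative TYPE('a) (n + 2)" if "n mod 4 = 1"
  proof -
    from that assms(2) have "4 \<le> n"
      by presburger
    then have "interchangeable (n + 2) [x, y, z] [y, z, x]" for x y z :: 'a
      by (intro generalized_commutative_rotate3_ge[OF assms(3)]) simp_all
    then have "interchangeable (n + 2) [x, y] [y, x]" for x y :: 'a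
      using swap_front_mod4_1[OF assms(3) that assms(2)]
      by (rule interchangeable_swap_if_swap_front)
    then show ?thesis
      by (rule eventually_commutative_if_swap)
  qed
  ultimately show ?thesis
    by blast
qed

end
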